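(* Let $n\ge 2$ and $\mu\in[0,1-\frac1n]$, and let $P=(p_{ij})$ be an optimal solution of problem (P) (i.e. an $n\times n$ MICK) all of whose entries are strictly positive. For $i,j\in\{1,\dots,n-1\}$ put $$\eta_{ij}=p_{ij}+p_{i+1,j}+p_{i,j+1}+p_{i+1,j+1}.$$ Then the quantity ("pseudo log odds ratio") $$\frac{1}{\eta_{ij}}\log\frac{p_{ij}\,p_{i+1,j+1}}{p_{i+1,j}\,p_{i,j+1}}$$ takes the same value for all $i,j\in\{1,\dots,n-1\}$.
   Context: An $n\times n$ checkerboard copula is a real $n\times n$ matrix $P=(p_{ij})$ with nonnegative entries whose row sums and column sums all equal $\frac1n$. Let $\Xi=(\xi_{ij})\in\mathbb{R}^{n\times n}$ with $\xi_{ij}=1$ if $i=j$, $\xi_{ij}=2$ if $i>j$, $\xi_{ij}=0$ if $i<j$. Kendall's $\tau$ of $P$ is $\tau(P)=1-\mathrm{tr}(\Xi P\Xi P^\top)$. Problem (P): minimize $I(P)=\sum_{i,j=1}^n p_{ij}\log p_{ij}$ (with $0\log 0=0$) over all $n\times n$ checkerboard copulas $P$ satisfying $1-\mathrm{tr}(\Xi P\Xi P^\top)=\mu$, where $\mu\in[0,1-\frac1n]$ is given. *)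

theory Defs
  imports Complex_Main
begin

text \<open>n x n matrices are functions nat => nat => real, indices 0..n-1 (0-based).\<close>

definition xi :: "nat \<Rightarrow> nat \<Rightarrow> real" where
  "xi i j = (if i = j then 1 else if i > j then 2 else 0)"

definition checkerboard_copula :: "nat \<Rightarrow> (nat \<Rightarrow> nat \<Rightarrow> real) \<Rightarrow> bool" where
  "checkerboard_copula n P \<longleftrightarrow>
     (\<forall>i<n. \<forall>j<n. 0 \<le> P i j) \<and>
     (\<forall>i<n. (\<Sum>j<n. P i j) = 1 / real n) \<and>
     (\<forall>j<n. (\<Sum>i<n. P i j) = 1 / real n)"

text \<open>tr(Xi P Xi P^T) = sum over i j k l of xi_ij p_jk xi_kl p_il.\<close>
definition kendall_tau :: "nat \<Rightarrow> (nat \<Rightarrow> nat \<Rightarrow> real) \<Rightarrow> real" where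
  "kendall_tau n P = 1 - (\<Sum>i<n. \<Sum>j<n. \<Sum>k<n. \<Sum>l<n. xi i j * P j k * xi k l * P i l)"

definition entropy_I :: "nat \<Rightarrow> (nat \<Rightarrow> nat \<Rightarrow> real) \<Rightarrow> real" where
  "entropy_I n P = (\<Sum>i<n. \<Sum>j<n. (if P i j = 0 then 0 else P i j * ln (P i j)))"

definition feasible_P :: "nat \<Rightarrow> real \<Rightarrow> (nat \<Rightarrow> nat \<Rightarrow> real) \<Rightarrow> bool" where
  "feasible_P n \<mu> P \<longleftrightarrow> checkerboard_copula n P \<and> kendall_tau n P = \<mu>"

definition optimal_P :: "nat \<Rightarrow> real \<Rightarrow> (nat \<Rightarrow> nat \<Rightarrow> real) \<Rightarrow> bool" where
  "optimal_P n \<mu> P \<longleftrightarrow> feasible_P n \<mu> P \<and>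
     (\<forall>Q. feasible_P n \<mu> Q \<longrightarrow> entropy_I n P \<le> entropy_I n Q)"

definition eta :: "(nat \<Rightarrow> nat \<Rightarrow> real) \<Rightarrow> nat \<Rightarrow> nat \<Rightarrow> real" where
  "eta P i j = P i j + P (i+1) j + P i (j+1) + P (i+1) (j+1)"

definition pseudo_log_odds :: "(nat \<Rightarrow> nat \<Rightarrow> real) \<Rightarrow> nat \<Rightarrow> nat \<Rightarrow> real" where
  "pseudo_log_odds P i j =
     (1 / eta P i j) * ln ((P i j * P (i+1) (j+1)) / (P (i+1) j * P i (j+1)))"

end

theory Submission
  imports Defs "HOL-Analysis.Analysis"
begin

text \<open>
  Adding t times the swap matrix at cell (a, b) (entries +1 at (a, b), (a+1, b+1) and -1 at
  (a+1, b), (a, b+1)) keeps all margins. Kendall's tau is 1 minus a quadratic form for which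
  every swap matrix is isotropic and whose polar value at P in that direction is -2 eta(a, b).
  Moving along one swap direction with parameter t and compensating along a second one with
  parameter s(t) therefore keeps tau fixed, and gives a feasible curve through P whenever the
  entries stay positive. Stationarity of the entropy along it yields the Lagrange condition
  log odds(a, b) / eta(a, b) = log odds(c, d) / eta(c, d).
\<close>

definition zero_margins :: "nat \<Rightarrow> (nat \<Rightarrow> nat \<Rightarrow> real) \<Rightarrow> bool" where
  "zero_margins n D \<longleftrightarrow> (\<forall>i<n. (\<Sum>j<n. D i j) = 0) \<and> (\<forall>j<n. (\<Sum>i<n. D i j) = 0)"

lemma zero_margins_lincomb:
  "zero_margins n D \<Longrightarrow> zero_margins n E \<Longrightarrow> zero_margins n (\<lambda>i j. t * D i j + s * E i j)"
  by (simp add: zero_margins_def sum.distrib flip: sum_distrib_left)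

lemma checkerboard_copula_add:
  assumes "checkerboard_copula n P" "zero_margins n D" "\<forall>i<n. \<forall>j<n. 0 \<le> P i j + D i j"
  shows "checkerboard_copula n (\<lambda>i j. P i j + D i j)"
  using assms by (simp add: checkerboard_copula_def zero_margins_def sum.distrib)

lemma sum_mult_zero_margins:
  "zero_margins n D \<Longrightarrow> (\<Sum>i<n. \<Sum>j<n. D i j * (g i j + c)) = (\<Sum>i<n. \<Sum>j<n. D i j * g i j)"
  by (simp add: zero_margins_def distrib_left sum.distrib flip: sum_distrib_right)

text \<open>\<^term>\<open>kendall_form n X Y\<close> is tr(\<Xi> X \<Xi> Y^T).\<close>

definition kendall_form :: "nat \<Rightarrow> (nat \<Rightarrow> nat \<Rightarrow> real) \<Rightarrow> (nat \<Rightarrow> nat \<Rightarrow> real) \<Rightarrow> real" where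
  "kendall_form n X Y = (\<Sum>i<n. \<Sum>j<n. \<Sum>k<n. \<Sum>l<n. xi i j * X j k * xi k l * Y i l)"

lemma kendall_tau_eq_kendall_form: "kendall_tau n P = 1 - kendall_form n P P"
  by (simp add: kendall_tau_def kendall_form_def)

lemma kendall_form_add_left:
  "kendall_form n (\<lambda>i j. X i j + c * Y i j) Z = kendall_form n X Z + c * kendall_form n Y Z"
  by (simp add: kendall_form_def algebra_simps sum.distrib sum_distrib_left)

lemma kendall_form_add_right:
  "kendall_form n Z (\<lambda>i j. X i j + c * Y i j) = kendall_form n Z X + c * kendall_form n Z Y"
  by (simp add: kendall_form_def algebra_simps sum.distrib sum_distrib_left)

lemma kendall_form_perturb:
  assumes "kendall_form n D D = 0" "kendall_form n E E = 0"
  shows "kendall_form n (\<lambda>i j. P i j + t * D i j + s * E i j) (\<lambda>i j. P i j + t * D i j + s * E i j)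
    = kendall_form n P P + t * (kendall_form n D P + kendall_form n P D)
      + s * (kendall_form n E P + kendall_form n P E) + t * s * (kendall_form n D E + kendall_form n E D)"
  unfolding kendall_form_add_left kendall_form_add_right using assms by (simp add: algebra_simps)

definition swap_matrix :: "nat \<Rightarrow> nat \<Rightarrow> nat \<Rightarrow> nat \<Rightarrow> real" where
  "swap_matrix a b i j =
     (of_bool (i = a) - of_bool (i = Suc a)) * (of_bool (j = b) - of_bool (j = Suc b))"

definition mixed_diff :: "(nat \<Rightarrow> nat \<Rightarrow> real) \<Rightarrow> nat \<Rightarrow> nat \<Rightarrow> real" where
  "mixed_diff g a b = g a b - g (Suc a) b - g a (Suc b) + g (Suc a) (Suc b)"

lemma sum_step_diff:
  "Suc a < n \<Longrightarrow> (\<Sum>i<n. (of_bool (i = a) - of_bool (i = Suc a)) * f i) = f a - (f (Suc a) :: real)"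
  by (simp add: left_diff_distrib sum_subtractf)

lemma sum_step_add:
  "Suc a < n \<Longrightarrow> (\<Sum>i<n. (of_bool (i = a) + of_bool (i = Suc a)) * f i) = f a + (f (Suc a) :: real)"
  by (simp add: distrib_right sum.distrib)

lemma sum_swap_matrix:
  assumes "Suc a < n" "Suc b < n"
  shows "(\<Sum>i<n. \<Sum>j<n. swap_matrix a b i j * g i j) = mixed_diff g a b"
  using assms by (simp add: swap_matrix_def mixed_diff_def mult.assoc sum_step_diff
      flip: sum_distrib_left)

lemma zero_margins_swap_matrix:
  assumes "Suc a < n" "Suc b < n"
  shows "zero_margins n (swap_matrix a b)"
  using sum_step_diff[OF assms(1), of "\<lambda>_. 1"] sum_step_diff[OF assms(2), of "\<lambda>_. 1"]
  by (simp add: zero_margins_def swap_matrix_def flip: sum_distrib_left sum_distrib_right)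

lemma sum_indicator_block_eq_eta:
  assumes "Suc a < n" "Suc b < n"
  shows "(\<Sum>i<n. \<Sum>l<n. (of_bool (i = a) + of_bool (i = Suc a))
      * (of_bool (l = b) + of_bool (l = Suc b)) * Y i l) = eta Y a b"
  using assms by (simp add: mult.assoc sum_step_add eta_def flip: sum_distrib_left)

lemma xi_step_left: "xi i a - xi i (Suc a) = of_bool (i = a) + of_bool (i = Suc a)"
  by (auto simp: xi_def)

lemma xi_step_right: "xi a l - xi (Suc a) l = - (of_bool (l = a) + of_bool (l = Suc a))"
  by (auto simp: xi_def)

lemma mixed_diff_sum:
  "mixed_diff (\<lambda>j k. \<Sum>i\<in>A. \<Sum>l\<in>B. f i j * g k l * Y i l) a b
    = (\<Sum>i\<in>A. \<Sum>l\<in>B. (f i a - f i (Suc a)) * (g b l - g (Suc b) l) * Y i l)"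
  by (simp add: mixed_diff_def left_diff_distrib right_diff_distrib sum_subtractf)

lemma kendall_form_swap_matrix_left:
  assumes "Suc a < n" "Suc b < n"
  shows "kendall_form n (swap_matrix a b) Y = - eta Y a b"
proof -
  have "kendall_form n (swap_matrix a b) Y
      = (\<Sum>j<n. \<Sum>k<n. swap_matrix a b j k * (\<Sum>i<n. \<Sum>l<n. xi i j * xi k l * Y i l))"
    unfolding kendall_form_def sum_distrib_left
    by (subst sum.swap, rule sum.cong, simp, subst sum.swap) (simp add: algebra_simps)
  also have "\<dots> = (\<Sum>i<n. \<Sum>l<n. (xi i a - xi i (Suc a)) * (xi b l - xi (Suc b) l) * Y i l)"
    using assms by (simp add: sum_swap_matrix mixed_diff_sum)
  also have "\<dots> = - (\<Sum>i<n. \<Sum>l<n. (of_bool (i = a) + of_bool (i = Suc a))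
      * (of_bool (l = b) + of_bool (l = Suc b)) * Y i l)"
    by (simp add: xi_step_left xi_step_right algebra_simps flip: sum_negf)
  finally show ?thesis
    using sum_indicator_block_eq_eta[OF assms] by simp
qed

lemma kendall_form_swap_matrix_right:
  assumes "Suc a < n" "Suc b < n"
  shows "kendall_form n Y (swap_matrix a b) = - eta Y a b"
proof -
  have "kendall_form n Y (swap_matrix a b)
      = (\<Sum>i<n. \<Sum>l<n. swap_matrix a b i l * (\<Sum>j<n. \<Sum>k<n. xi i j * xi k l * Y j k))"
    unfolding kendall_form_def sum_distrib_left
    by (rule sum.cong, simp, subst (2) sum.swap, subst sum.swap) (simp add: algebra_simps)
  also have "\<dots> = (\<Sum>j<n. \<Sum>k<n. (xi a j - xi (Suc a) j) * (xi k b - xi k (Suc b)) * Y j k)"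
    using assms by (simp add: sum_swap_matrix mixed_diff_sum)
  also have "\<dots> = - (\<Sum>j<n. \<Sum>k<n. (of_bool (j = a) + of_bool (j = Suc a))
      * (of_bool (k = b) + of_bool (k = Suc b)) * Y j k)"
    by (simp add: xi_step_left xi_step_right algebra_simps flip: sum_negf)
  finally show ?thesis
    using sum_indicator_block_eq_eta[OF assms] by simp
qed

lemma entropy_I_eq: "entropy_I n X = (\<Sum>i<n. \<Sum>j<n. X i j * ln (X i j))"
  unfolding entropy_I_def by (intro sum.cong) auto

lemma DERIV_mult_ln_self:
  fixes q :: "real \<Rightarrow> real"
  assumes "DERIV q x :> q'" "0 < q x"
  shows "DERIV (\<lambda>t. q t * ln (q t)) x :> q' * (ln (q x) + 1)"
  using assms by (auto intro!: derivative_eq_intros simp: field_simps)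

lemma eventually_entries_pos:
  fixes Q :: "real \<Rightarrow> nat \<Rightarrow> nat \<Rightarrow> real"
  assumes "\<And>i j. isCont (\<lambda>t. Q t i j) x" "\<forall>i<n. \<forall>j<n. 0 < Q x i j"
  shows "\<forall>\<^sub>F t in at x. \<forall>i<n. \<forall>j<n. 0 < Q t i j"
proof -
  have "\<forall>\<^sub>F t in at x. \<forall>i\<in>{..<n}. \<forall>j\<in>{..<n}. 0 < Q t i j"
    using order_tendstoD(1)[OF assms(1)[unfolded isCont_def]] assms(2)
    by (intro eventually_ball_finite ballI) auto
  then show ?thesis by (rule eventually_mono) auto
qed

lemma optimal_P_first_variation:
  assumes opt: "optimal_P n \<mu> P" and pos: "\<forall>i<n. \<forall>j<n. 0 < P i j"
    and Q0: "Q 0 = P" and dQ: "\<And>i j. DERIV (\<lambda>t. Q t i j) 0 :> Q' i j"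
    and feasible: "\<forall>\<^sub>F t in at 0. feasible_P n \<mu> (Q t)"
  shows "(\<Sum>i<n. \<Sum>j<n. Q' i j * (ln (P i j) + 1)) = 0"
proof -
  let ?d = "\<Sum>i<n. \<Sum>j<n. Q' i j * (ln (P i j) + 1)"
  have "DERIV (\<lambda>t. entropy_I n (Q t)) 0 :> ?d"
    unfolding entropy_I_eq using DERIV_mult_ln_self[OF dQ] pos Q0 by (intro DERIV_sum) auto
  moreover have "\<forall>\<^sub>F t in at 0. entropy_I n (Q 0) \<le> entropy_I n (Q t)"
    using feasible by eventually_elim (use opt Q0 in \<open>simp add: optimal_P_def\<close>)
  ultimately have "(\<lambda>h. ?d * h) = (\<lambda>h. 0)"
    unfolding has_field_derivative_def by (rule has_derivative_local_min)
  then show ?thesis by (drule_tac x=1 in fun_cong) simp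
qed

lemma optimal_P_stationary_pair:
  assumes opt: "optimal_P n \<mu> P" and pos: "\<forall>i<n. \<forall>j<n. 0 < P i j"
    and D: "zero_margins n D" "kendall_form n D D = 0"
    and E: "zero_margins n E" "kendall_form n E E = 0"
    and nondeg: "kendall_form n E P + kendall_form n P E \<noteq> 0"
  shows "(\<Sum>i<n. \<Sum>j<n. D i j * ln (P i j)) * (kendall_form n E P + kendall_form n P E)
       = (\<Sum>i<n. \<Sum>j<n. E i j * ln (P i j)) * (kendall_form n D P + kendall_form n P D)"
proof -
  define \<alpha> where "\<alpha> = kendall_form n D P + kendall_form n P D"
  define \<beta> where "\<beta> = kendall_form n E P + kendall_form n P E"
  define C where "C = kendall_form n D E + kendall_form n E D"
  \<comment> \<open>Since D and E are isotropic, tau is affine in s along t D + s E; s t solves for constant tau.\<close>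
  define s where "s t = - t * \<alpha> / (\<beta> + t * C)" for t
  define Q where "Q t = (\<lambda>i j. P i j + (t * D i j + s t * E i j))" for t
  have "\<beta> \<noteq> 0" using nondeg by (simp add: \<beta>_def)
  have ds: "DERIV s 0 :> - \<alpha> / \<beta>"
    unfolding s_def using \<open>\<beta> \<noteq> 0\<close> by (auto intro!: derivative_eq_intros simp: power2_eq_square)
  have dQ: "DERIV (\<lambda>t. Q t i j) 0 :> D i j + - \<alpha> / \<beta> * E i j" for i j
    unfolding Q_def by (auto intro!: derivative_eq_intros ds)
  have Q0: "Q 0 = P" by (simp add: Q_def s_def fun_eq_iff)
  have "((\<lambda>t. \<beta> + t * C) \<longlongrightarrow> \<beta>) (at 0)"
    by (auto intro!: tendsto_eq_intros)
  then have "\<forall>\<^sub>F t in at 0. \<beta> + t * C \<noteq> 0"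
    using \<open>\<beta> \<noteq> 0\<close> by (rule tendsto_imp_eventually_ne)
  moreover have "\<forall>\<^sub>F t in at 0. \<forall>i<n. \<forall>j<n. 0 < Q t i j"
    using DERIV_isCont[OF dQ] pos Q0 by (intro eventually_entries_pos) auto
  ultimately have "\<forall>\<^sub>F t in at 0. feasible_P n \<mu> (Q t)"
  proof eventually_elim
    case (elim t)
    have "checkerboard_copula n (Q t)"
      using opt elim(2) zero_margins_lincomb[OF D(1) E(1)] unfolding Q_def
      by (auto simp: optimal_P_def feasible_P_def less_imp_le intro!: checkerboard_copula_add)
    moreover have "s t * (\<beta> + t * C) = - t * \<alpha>"
      using elim(1) by (simp add: s_def)
    then have "kendall_tau n (Q t) = kendall_tau n P"
      using kendall_form_perturb[OF D(2) E(2), of P t "s t"]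
      by (simp add: kendall_tau_eq_kendall_form Q_def \<alpha>_def \<beta>_def C_def algebra_simps)
    ultimately show ?case
      using opt by (simp add: feasible_P_def optimal_P_def)
  qed
  from optimal_P_first_variation[OF opt pos Q0 dQ this]
  have "(\<Sum>i<n. \<Sum>j<n. D i j * (ln (P i j) + 1)) + - \<alpha> / \<beta> * (\<Sum>i<n. \<Sum>j<n. E i j * (ln (P i j) + 1)) = 0"
    by (simp only: distrib_right sum.distrib sum_distrib_left mult.assoc)
  then have "(\<Sum>i<n. \<Sum>j<n. D i j * ln (P i j)) + - \<alpha> / \<beta> * (\<Sum>i<n. \<Sum>j<n. E i j * ln (P i j)) = 0"
    by (simp only: sum_mult_zero_margins[OF D(1)] sum_mult_zero_margins[OF E(1)])
  then show ?thesis
    using \<open>\<beta> \<noteq> 0\<close> by (simp add: \<alpha>_def \<beta>_def field_simps)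
qed

lemma eta_pos:
  "\<forall>i<n. \<forall>j<n. 0 < P i j \<Longrightarrow> Suc a < n \<Longrightarrow> Suc b < n \<Longrightarrow> 0 < eta P a b"
  by (simp add: eta_def add_pos_pos)

lemma optimal_P_log_odds_proportional:
  assumes opt: "optimal_P n \<mu> P" and pos: "\<forall>i<n. \<forall>j<n. 0 < P i j"
    and ab: "Suc a < n" "Suc b < n" and cd: "Suc c < n" "Suc d < n"
  shows "mixed_diff (\<lambda>i j. ln (P i j)) a b * eta P c d = mixed_diff (\<lambda>i j. ln (P i j)) c d * eta P a b"
proof -
  have isotropic: "kendall_form n (swap_matrix a' b') (swap_matrix a' b') = 0"
    if "Suc a' < n" "Suc b' < n" for a' b'
    using that by (simp add: kendall_form_swap_matrix_left eta_def swap_matrix_def)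
  have "0 < eta P c d" using eta_pos[OF pos cd] .
  then show ?thesis
    using optimal_P_stationary_pair[OF opt pos zero_margins_swap_matrix[OF ab] isotropic[OF ab]
        zero_margins_swap_matrix[OF cd] isotropic[OF cd]]
    by (simp add: sum_swap_matrix ab cd kendall_form_swap_matrix_left kendall_form_swap_matrix_right)
qed

lemma pseudo_log_odds_eq_mixed_diff:
  assumes "\<forall>i<n. \<forall>j<n. 0 < P i j" "Suc a < n" "Suc b < n"
  shows "pseudo_log_odds P a b = mixed_diff (\<lambda>i j. ln (P i j)) a b / eta P a b"
proof -
  have "0 < P a b" "0 < P (Suc a) b" "0 < P a (Suc b)" "0 < P (Suc a) (Suc b)"
    using assms by auto
  then show ?thesis by (simp add: pseudo_log_odds_def mixed_diff_def ln_div ln_mult)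
qed

theorem theorem3:
  fixes n :: nat and \<mu> :: real and P :: "nat \<Rightarrow> nat \<Rightarrow> real"
  assumes "n \<ge> 2"
    and "0 \<le> \<mu>" and "\<mu> \<le> 1 - 1 / real n"
    and "optimal_P n \<mu> P"
    and "\<forall>i<n. \<forall>j<n. 0 < P i j"
  shows "\<exists>c. \<forall>i j. i + 1 < n \<and> j + 1 < n \<longrightarrow> pseudo_log_odds P i j = c"
proof (intro exI allI impI)
  \<comment> \<open>The bounds on \<mu> only make (P) feasible.\<close>
  fix i j assume "i + 1 < n \<and> j + 1 < n"
  then have ij: "Suc i < n" "Suc j < n" by simp_all
  have 0: "Suc 0 < n" using assms(1) by simp
  have "mixed_diff (\<lambda>i j. ln (P i j)) i j * eta P 0 0 = mixed_diff (\<lambda>i j. ln (P i j)) 0 0 * eta P i j"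
    using optimal_P_log_odds_proportional[OF assms(4,5) ij 0 0] .
  then show "pseudo_log_odds P i j = pseudo_log_odds P 0 0"
    using eta_pos[OF assms(5) ij] eta_pos[OF assms(5) 0 0]
    by (simp add: pseudo_log_odds_eq_mixed_diff[OF assms(5)] ij 0 field_simps)
qed

end
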